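(* Let $(\Omega,\Sigma,\mu)$ be a $\sigma$-finite atomless measure space and let $0<\alpha\le\infty$. Suppose that $u,v\in L_0(\mu)$ with $u,v\ge 0$ and $u\wedge v=0$ (i.e. $\min(u,v)=0$ a.e.), and suppose $f\in L_0(0,\infty)$, $f\ge 0$, is such that $$\int_0^t u^*(s)\,ds\le\int_0^t f^*(s)\,ds,\qquad \int_0^t v^*(s)\,ds\le\int_0^t f^*(s)\,ds,\qquad 0\le t<\alpha .$$ Then $$\int_0^t (u+v)^*(s)\,ds\le \int_0^t (D_2f^* )(s)\,ds,\qquad 0\le t<\alpha,$$ where $(D_2 g)(t)=g(t/2)$ for $t\ge 0$.
   Context: $L_0(\mu)$ denotes the space of (classes of) $\mu$-measurable real functions. For $f\in L_0(\mu)$, the distribution function is $d_{|f|}(s)=\mu(\{x:|f(x)|>s\})$, $s\ge0$, and the decreasing rearrangement is $f^*(t)=\inf\{s\ge 0: d_{|f|}(s)\le t\}$, $t\ge 0$. The space $(0,\infty)$ carries Lebesgue measure. *)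

theory Defs
  imports "HOL-Analysis.Analysis"
begin

definition distrib_fun :: "'a measure \<Rightarrow> ('a \<Rightarrow> real) \<Rightarrow> real \<Rightarrow> ennreal" where
  "distrib_fun M f s = emeasure M {x \<in> space M. \<bar>f x\<bar> > s}"

(* Decreasing rearrangement f^*(t) = inf {s >= 0. d_{|f|}(s) <= t}, values in [0,\<infinity>]
   (the infimum of the empty set is \<infinity>) *)
definition decr_rearr :: "'a measure \<Rightarrow> ('a \<Rightarrow> real) \<Rightarrow> real \<Rightarrow> ennreal" where
  "decr_rearr M f t = Inf (ennreal ` {s. 0 \<le> s \<and> distrib_fun M f s \<le> ennreal t})"

definition atomless :: "'a measure \<Rightarrow> bool" where
  "atomless M \<longleftrightarrow> (\<forall>A\<in>sets M. 0 < emeasure M A \<longrightarrow>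
      (\<exists>B\<in>sets M. B \<subseteq> A \<and> 0 < emeasure M B \<and> emeasure M B < emeasure M A))"

definition halfline :: "real measure" where
  "halfline = restrict_space lebesgue {0<..}"

end

theory Submission
  imports Defs
begin

text \<open>
  By the layer-cake formula, \<open>\<integral>\<^sub>0\<^sup>t w\<^sup>* = \<integral>\<^sub>0\<^sup>\<infinity> min t (d\<^sub>w \<lambda>) d\<lambda>\<close>. Since \<open>u\<close> and \<open>v\<close> have
  disjoint supports, \<open>d\<^sub>u\<^sub>+\<^sub>v = d\<^sub>u + d\<^sub>v\<close>. Splitting \<open>t = a + b\<close> at the level where
  \<open>d\<^sub>u + d\<^sub>v\<close> crosses \<open>t\<close> gives \<open>min t (d\<^sub>u + d\<^sub>v) \<le> min a d\<^sub>u + min b d\<^sub>v\<close> pointwise, hence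
  \<open>\<integral>\<^sub>0\<^sup>t (u + v)\<^sup>* \<le> \<integral>\<^sub>0\<^sup>a u\<^sup>* + \<integral>\<^sub>0\<^sup>b v\<^sup>* \<le> \<integral>\<^sub>0\<^sup>a f\<^sup>* + \<integral>\<^sub>0\<^sup>b f\<^sup>*\<close>. Finally
  \<open>min a d + min b d \<le> min (a + b) (2 d)\<close>, and \<open>2 d\<^sub>f\<close> is the distribution function of
  \<open>s \<mapsto> f\<^sup>*(s/2)\<close>.
\<close>

lemma ennreal_INF_add_left:
  fixes c :: ennreal
  assumes "I \<noteq> {}"
  shows "(INF i\<in>I. f i + c) = (INF i\<in>I. f i) + c"
  using continuous_at_Inf_mono[of "\<lambda>x. x + c" "f ` I"] assms
  using continuous_add[of "at_right (Inf (f ` I))", of "\<lambda>x. x" "\<lambda>x. c"]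
  by (auto simp: mono_def image_comp)

lemma INF_add_directed_ennreal:
  fixes f g :: "_ \<Rightarrow> ennreal"
  assumes directed: "\<And>i j. i \<in> I \<Longrightarrow> j \<in> I \<Longrightarrow> \<exists>k\<in>I. f k + g k \<le> f i + g j"
  shows "(INF i\<in>I. f i + g i) = (INF i\<in>I. f i) + (INF i\<in>I. g i)"
proof (cases "I = {}")
  case False
  show ?thesis
  proof (rule antisym)
    show "(INF i\<in>I. f i) + (INF i\<in>I. g i) \<le> (INF i\<in>I. f i + g i)"
      by (rule INF_greatest; intro add_mono INF_lower)
  next
    have "(INF i\<in>I. f i + g i) \<le> (INF i\<in>I. (INF j\<in>I. f i + g j))"
      using directed by (intro INF_greatest) (blast intro: INF_lower2)
    also have "\<dots> = (INF i\<in>I. f i + (INF j\<in>I. g j))"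
      using ennreal_INF_add_left[OF False, of g] by (simp add: add.commute)
    also have "\<dots> = (INF i\<in>I. f i) + (INF i\<in>I. g i)"
      by (rule ennreal_INF_add_left[OF False])
    finally show "(INF i\<in>I. f i + g i) \<le> (INF i\<in>I. f i) + (INF i\<in>I. g i)" .
  qed
qed simp

lemma ennreal_split_between:
  fixes p q A B :: ennreal and t :: real
  assumes "0 \<le> t" "p + q \<le> ennreal t" "ennreal t \<le> A + B" "p \<le> A" "q \<le> B"
  obtains a b where "0 \<le> a" "0 \<le> b" "a + b = t"
    "p \<le> ennreal a" "ennreal a \<le> A" "q \<le> ennreal b" "ennreal b \<le> B"
proof -
  obtain p' q' where p': "p = ennreal p'" "0 \<le> p'" and q': "q = ennreal q'" "0 \<le> q'"
    using assms(2)
    by (cases p rule: ennreal_cases; cases q rule: ennreal_cases) (auto simp: top_unique)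
  have pq: "p' + q' \<le> t"
    using assms(1,2) p' q' by (simp add: ennreal_plus[symmetric] del: ennreal_plus)
  show ?thesis
  proof (cases A rule: ennreal_cases)
    case top
    show ?thesis
      by (rule that[of "t - q'" q']) (use top pq p' q' assms(5) in \<open>auto intro: ennreal_leI\<close>)
  next
    case (real A')
    define a where "a = min A' (t - q')"
    have "p' \<le> A'" using assms(4) real p' by (simp add: ennreal_le_iff)
    moreover have "ennreal (t - a) \<le> B"
    proof (cases "A' \<le> t - q'")
      case True
      then show ?thesis
        using assms(3) real by (cases B rule: ennreal_cases)
          (auto simp: a_def ennreal_plus[symmetric] simp del: ennreal_plus intro: ennreal_leI)
    qed (use q' assms(5) a_def in auto)
    ultimately show ?thesis
      by (intro that[of a "t - a"]) (use pq p' q' real in \<open>auto simp: a_def intro: ennreal_leI\<close>)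
  qed
qed

text \<open>
  The splitting point \<open>a\<close> lies between the values of \<open>F\<close> below and above the level
  where \<open>F + G\<close> drops to \<open>t\<close>; only monotonicity is needed, not right-continuity.
\<close>

lemma antimono_min_add_split:
  fixes F G :: "real \<Rightarrow> ennreal" and t :: real
  assumes "0 \<le> t" and F: "antimono F" and G: "antimono G"
  obtains a b where "0 \<le> a" "0 \<le> b" "a + b = t"
    "\<And>l. min (ennreal t) (F l + G l) \<le> min (ennreal a) (F l) + min (ennreal b) (G l)"
proof -
  define L where "L = {l. F l + G l \<le> ennreal t}"
  have below_L: "l' < l" if "l \<in> L" "l' \<notin> L" for l l'
  proof (rule ccontr)
    assume "\<not> l' < l"
    then have "F l' + G l' \<le> F l + G l"
      using F G by (intro add_mono) (auto simp: antimono_def)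
    then show False using that by (auto simp: L_def)
  qed
  have directed_L: "\<exists>k\<in>L. F i + G j \<le> F k + G k" if "i \<in> L" "j \<in> L" for i j
  proof
    show "F i + G j \<le> F (min i j) + G (min i j)"
      using F G by (intro add_mono) (simp_all add: antimono_def)
  qed (use that in \<open>simp add: min_def\<close>)
  have directed_not_L: "\<exists>k\<in>-L. F k + G k \<le> F i + G j" if "i \<in> -L" "j \<in> -L" for i j
  proof
    show "F (max i j) + G (max i j) \<le> F i + G j"
      using F G by (intro add_mono) (simp_all add: antimono_def)
  qed (use that in \<open>simp add: max_def\<close>)
  define P where "P = (SUP l\<in>L. F l)"
  define Q where "Q = (SUP l\<in>L. G l)"
  define A where "A = (INF l\<in>-L. F l)"
  define B where "B = (INF l\<in>-L. G l)"
  have "P + Q = (SUP l\<in>L. F l + G l)"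
    unfolding P_def Q_def by (intro SUP_add_directed_ennreal[symmetric] directed_L)
  also have "\<dots> \<le> ennreal t" by (rule SUP_least) (simp add: L_def)
  finally have PQ: "P + Q \<le> ennreal t" .
  have "ennreal t \<le> (INF l\<in>-L. F l + G l)" by (rule INF_greatest) (auto simp: L_def)
  also have "\<dots> = A + B"
    unfolding A_def B_def by (intro INF_add_directed_ennreal directed_not_L)
  finally have AB: "ennreal t \<le> A + B" .
  have "P \<le> A" "Q \<le> B"
    unfolding P_def Q_def A_def B_def using below_L F G
    by (auto intro!: SUP_least INF_greatest simp: antimono_def less_imp_le)
  then obtain a b where ab: "0 \<le> a" "0 \<le> b" "a + b = t"
    "P \<le> ennreal a" "ennreal a \<le> A" "Q \<le> ennreal b" "ennreal b \<le> B"
    using ennreal_split_between[OF \<open>0 \<le> t\<close> PQ AB] by blast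
  show ?thesis
  proof (rule that[OF ab(1-3)])
    fix l
    show "min (ennreal t) (F l + G l) \<le> min (ennreal a) (F l) + min (ennreal b) (G l)"
    proof (cases "l \<in> L")
      case True
      then have "F l \<le> ennreal a" "G l \<le> ennreal b"
        using ab(4,6) unfolding P_def Q_def by (meson SUP_upper order_trans)+
      then show ?thesis by simp
    next
      case False
      then have "ennreal a \<le> F l" "ennreal b \<le> G l"
        using ab(5,7) unfolding A_def B_def by (meson ComplI INF_lower order_trans)+
      then show ?thesis using ab(1-3) by (simp add: ennreal_plus[symmetric] del: ennreal_plus)
    qed
  qed
qed

lemma borel_measurable_antimono_ennreal:
  fixes g :: "real \<Rightarrow> ennreal"
  assumes "antimono g"
  shows "g \<in> borel_measurable borel"
proof (rule borel_measurableI_greater)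
  fix y
  have "is_interval {x. y < g x}"
    unfolding is_interval_1
  proof safe
    fix a b x assume "y < g a" "y < g b" "a \<le> x" "x \<le> b"
    then show "y < g x" using assms[THEN antimonoD, of x b] by auto
  qed
  then show "{x \<in> space borel. y < g x} \<in> sets borel"
    using real_interval_borel_measurable by simp
qed

lemma emeasure_lborel_atLeast: "emeasure lborel {a::real..} = \<infinity>"
proof -
  have "top = (SUP n. emeasure lborel {a..a + real n})"
    by (rule ennreal_SUP_eq_top[symmetric]) (auto simp: ennreal_of_nat_eq_real_of_nat)
  also have "\<dots> \<le> emeasure lborel {a..}"
    by (intro SUP_least emeasure_mono) auto
  finally show ?thesis by (simp add: top_unique)
qed

lemma emeasure_lborel_less_ennreal: "emeasure lborel {l::real. 0 \<le> l \<and> ennreal l < x} = x"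
proof (cases x rule: ennreal_cases)
  case (real r)
  then have "{l::real. 0 \<le> l \<and> ennreal l < x} = {0..<r}" by (auto simp: ennreal_less_iff)
  then show ?thesis using real by simp
next
  case top
  then have "{l::real. 0 \<le> l \<and> ennreal l < x} = {0..}" by auto
  then show ?thesis using top emeasure_lborel_atLeast by simp
qed

lemma emeasure_lborel_Icc_less_ennreal:
  assumes "0 \<le> t"
  shows "emeasure lborel {s::real. 0 \<le> s \<and> s \<le> t \<and> ennreal s < x} = min (ennreal t) x"
proof (cases x rule: ennreal_cases)
  case (real r)
  show ?thesis
  proof (cases "r \<le> t")
    case True
    then have "{s. 0 \<le> s \<and> s \<le> t \<and> ennreal s < x} = {0..<r}"
      using real by (auto simp: ennreal_less_iff)
    then show ?thesis using real True by (simp add: min_ennreal assms)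
  next
    case False
    then have "{s. 0 \<le> s \<and> s \<le> t \<and> ennreal s < x} = {0..t}"
      using real by (auto simp: ennreal_less_iff)
    then show ?thesis using real False by (simp add: min_ennreal assms)
  qed
next
  case top
  then have "{s. 0 \<le> s \<and> s \<le> t \<and> ennreal s < x} = {0..t}" by auto
  then show ?thesis using top assms by simp
qed

text \<open>
  Both sides are the measure of \<open>{(s, l). 0 \<le> s \<le> t, 0 \<le> l, s < g l}\<close>, computed by Tonelli.
\<close>

lemma nn_integral_Icc_layer_cake:
  fixes g h :: "real \<Rightarrow> ennreal" and t :: real
  assumes t: "0 \<le> t" and g[measurable]: "g \<in> borel_measurable borel"
    and superlevel: "\<And>s l. 0 \<le> s \<Longrightarrow> s \<le> t \<Longrightarrow> 0 \<le> l \<Longrightarrow> ennreal l < h s \<longleftrightarrow> ennreal s < g l"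
  shows "(\<integral>\<^sup>+ s\<in>{0..t}. h s \<partial>lborel) = (\<integral>\<^sup>+ l\<in>{0..}. min (ennreal t) (g l) \<partial>lborel)"
proof -
  define k :: "real \<Rightarrow> real \<Rightarrow> ennreal" where
    "k s l = indicator {p. 0 \<le> fst p \<and> fst p \<le> t \<and> 0 \<le> snd p \<and> ennreal (fst p) < g (snd p)} (s, l)"
    for s l
  have k_measurable: "case_prod k \<in> borel_measurable (lborel \<Otimes>\<^sub>M lborel)"
    unfolding k_def by measurable
  have inner_l: "h s * indicator {0..t} s = (\<integral>\<^sup>+ l. k s l \<partial>lborel)" for s
  proof (cases "0 \<le> s \<and> s \<le> t")
    case True
    have "(\<integral>\<^sup>+ l. k s l \<partial>lborel) = (\<integral>\<^sup>+ l. indicator {l. 0 \<le> l \<and> ennreal l < h s} l \<partial>lborel)"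
      using True superlevel by (intro nn_integral_cong) (auto simp: k_def split: split_indicator)
    also have "\<dots> = h s"
      by (simp add: emeasure_lborel_less_ennreal)
    finally show ?thesis using True by simp
  qed (auto simp: k_def)
  have inner_s: "min (ennreal t) (g l) * indicator {0..} l = (\<integral>\<^sup>+ s. k s l \<partial>lborel)" for l
  proof (cases "0 \<le> l")
    case True
    have "(\<integral>\<^sup>+ s. k s l \<partial>lborel)
        = (\<integral>\<^sup>+ s. indicator {s. 0 \<le> s \<and> s \<le> t \<and> ennreal s < g l} s \<partial>lborel)"
      using True by (intro nn_integral_cong) (auto simp: k_def split: split_indicator)
    also have "\<dots> = min (ennreal t) (g l)"
      using t by (simp add: emeasure_lborel_Icc_less_ennreal)
    finally show ?thesis using True by simp
  qed (auto simp: k_def)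
  have "(\<integral>\<^sup>+ s\<in>{0..t}. h s \<partial>lborel) = (\<integral>\<^sup>+ s. \<integral>\<^sup>+ l. k s l \<partial>lborel \<partial>lborel)"
    using inner_l by simp
  also have "\<dots> = (\<integral>\<^sup>+ l. \<integral>\<^sup>+ s. k s l \<partial>lborel \<partial>lborel)"
    using lborel_pair.Fubini'[OF k_measurable] by simp
  also have "\<dots> = (\<integral>\<^sup>+ l\<in>{0..}. min (ennreal t) (g l) \<partial>lborel)"
    using inner_s by simp
  finally show ?thesis .
qed

lemma antimono_distrib_fun:
  assumes "w \<in> borel_measurable M"
  shows "antimono (distrib_fun M w)"
  unfolding distrib_fun_def
proof (intro antimonoI emeasure_mono)
  fix x :: real
  show "{y \<in> space M. x < \<bar>w y\<bar>} \<in> sets M" using assms by measurable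
qed auto

lemma distrib_fun_eq_SUP_right:
  assumes "w \<in> borel_measurable M"
  shows "distrib_fun M w x = (SUP n. distrib_fun M w (x + 1 / Suc n))"
proof -
  let ?A = "\<lambda>n. {y \<in> space M. x + 1 / Suc n < \<bar>w y\<bar>}"
  have inc: "incseq ?A"
  proof (rule incseq_SucI, safe)
    fix n y assume "x + 1 / Suc n < \<bar>w y\<bar>"
    moreover have "1 / real (Suc (Suc n)) \<le> 1 / Suc n" by (simp add: frac_le)
    ultimately show "x + 1 / Suc (Suc n) < \<bar>w y\<bar>" by linarith
  qed
  have "(\<Union>n. ?A n) = {y \<in> space M. x < \<bar>w y\<bar>}"
  proof safe
    fix y assume "y \<in> space M" "x < \<bar>w y\<bar>"
    then obtain n where "1 / Suc n < \<bar>w y\<bar> - x"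
      using reals_Archimedean[of "\<bar>w y\<bar> - x"] by (auto simp: inverse_eq_divide)
    then have "x + 1 / Suc n < \<bar>w y\<bar>" by linarith
    then show "y \<in> (\<Union>n. ?A n)" using \<open>y \<in> space M\<close> by blast
  next
    fix y n assume "x + 1 / Suc n < \<bar>w y\<bar>"
    moreover have "0 < 1 / real (Suc n)" by simp
    ultimately show "x < \<bar>w y\<bar>" by linarith
  qed
  moreover have "range ?A \<subseteq> sets M" using assms by auto
  ultimately show ?thesis
    unfolding distrib_fun_def using SUP_emeasure_incseq[OF _ inc] by simp
qed

text \<open>The decreasing rearrangement is the generalized inverse of the distribution function;
  right-continuity of \<open>distrib_fun\<close> makes the superlevel sets match exactly.\<close>

lemma ennreal_less_decr_rearr_iff:
  assumes "w \<in> borel_measurable M" "0 \<le> l"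
  shows "ennreal l < decr_rearr M w s \<longleftrightarrow> ennreal s < distrib_fun M w l"
proof
  assume "ennreal l < decr_rearr M w s"
  show "ennreal s < distrib_fun M w l"
  proof (rule ccontr)
    assume "\<not> ennreal s < distrib_fun M w l"
    then have "decr_rearr M w s \<le> ennreal l"
      using assms(2) unfolding decr_rearr_def by (auto intro: Inf_lower)
    then show False using \<open>ennreal l < decr_rearr M w s\<close> by simp
  qed
next
  assume less: "ennreal s < distrib_fun M w l"
  show "ennreal l < decr_rearr M w s"
  proof (rule ccontr)
    assume "\<not> ennreal l < decr_rearr M w s"
    then have le: "decr_rearr M w s \<le> ennreal l" by simp
    have "distrib_fun M w (l + 1 / Suc n) \<le> ennreal s" for n
    proof -
      have "decr_rearr M w s < ennreal (l + 1 / Suc n)"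
        using le by (rule le_less_trans) (simp add: ennreal_less_iff assms(2))
      then obtain r where r: "0 \<le> r" "distrib_fun M w r \<le> ennreal s" "ennreal r < ennreal (l + 1 / Suc n)"
        unfolding decr_rearr_def by (auto simp: Inf_less_iff)
      then have "r \<le> l + 1 / Suc n" using ennreal_less_iff[OF r(1)] by auto
      then have "distrib_fun M w (l + 1 / Suc n) \<le> distrib_fun M w r"
        using antimono_distrib_fun[OF assms(1), THEN antimonoD] by blast
      then show ?thesis using r(2) by simp
    qed
    then have "distrib_fun M w l \<le> ennreal s"
      by (subst distrib_fun_eq_SUP_right[OF assms(1)]) (auto intro: SUP_least)
    then show False using less by simp
  qed
qed

lemma nn_integral_decr_rearr:
  assumes "w \<in> borel_measurable M" "0 \<le> t"
  shows "(\<integral>\<^sup>+ s\<in>{0..t}. decr_rearr M w s \<partial>lborel)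
    = (\<integral>\<^sup>+ l\<in>{0..}. min (ennreal t) (distrib_fun M w l) \<partial>lborel)"
  using assms
  by (intro nn_integral_Icc_layer_cake borel_measurable_antimono_ennreal antimono_distrib_fun
      ennreal_less_decr_rearr_iff)

lemma ennreal_half_less_iff:
  fixes x :: ennreal
  assumes "0 \<le> s"
  shows "ennreal (s / 2) < x \<longleftrightarrow> ennreal s < 2 * x"
proof (cases x rule: ennreal_cases)
  case (real r)
  then have "2 * x = ennreal (2 * r)" by (simp add: ennreal_mult)
  then show ?thesis using real assms by (simp add: ennreal_less_iff mult.commute)
qed simp

lemma nn_integral_decr_rearr_half:
  assumes "w \<in> borel_measurable M" "0 \<le> t"
  shows "(\<integral>\<^sup>+ s\<in>{0..t}. decr_rearr M w (s / 2) \<partial>lborel)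
    = (\<integral>\<^sup>+ l\<in>{0..}. min (ennreal t) (2 * distrib_fun M w l) \<partial>lborel)"
proof (rule nn_integral_Icc_layer_cake[OF assms(2)])
  show "(\<lambda>l. 2 * distrib_fun M w l) \<in> borel_measurable borel"
    using borel_measurable_antimono_ennreal[OF antimono_distrib_fun[OF assms(1)]] by measurable
  fix s l :: real assume "0 \<le> s" "0 \<le> l"
  then show "ennreal l < decr_rearr M w (s / 2) \<longleftrightarrow> ennreal s < 2 * distrib_fun M w l"
    using ennreal_less_decr_rearr_iff[OF assms(1) \<open>0 \<le> l\<close>] ennreal_half_less_iff by simp
qed

lemma distrib_fun_add_disjoint:
  assumes [measurable]: "u \<in> borel_measurable M" "v \<in> borel_measurable M"
    and disjoint: "AE x in M. min (u x) (v x) = 0" and "0 \<le> l"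
  shows "distrib_fun M (\<lambda>x. u x + v x) l = distrib_fun M u l + distrib_fun M v l"
proof -
  have as_integral: "distrib_fun M w l = (\<integral>\<^sup>+x. indicator {x\<in>space M. l < \<bar>w x\<bar>} x \<partial>M)"
    if [measurable]: "w \<in> borel_measurable M" for w
    unfolding distrib_fun_def by (rule nn_integral_indicator[symmetric]) measurable
  have "AE x in M. indicator {x\<in>space M. l < \<bar>u x + v x\<bar>} x
      = (indicator {x\<in>space M. l < \<bar>u x\<bar>} x + indicator {x\<in>space M. l < \<bar>v x\<bar>} x :: ennreal)"
    using disjoint
  proof eventually_elim
    case (elim x)
    then show ?case
      using \<open>0 \<le> l\<close> by (cases "u x = 0") (auto split: split_indicator simp: min_def split: if_splits)
  qed
  then have "distrib_fun M (\<lambda>x. u x + v x) l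
      = (\<integral>\<^sup>+x. indicator {x\<in>space M. l < \<bar>u x\<bar>} x + indicator {x\<in>space M. l < \<bar>v x\<bar>} x \<partial>M)"
    by (simp add: as_integral nn_integral_cong_AE)
  also have "\<dots> = distrib_fun M u l + distrib_fun M v l"
    by (subst nn_integral_add) (auto simp: as_integral)
  finally show ?thesis .
qed

lemma nn_integral_decr_rearr_add_le:
  assumes u: "u \<in> borel_measurable M" and v: "v \<in> borel_measurable M"
    and disjoint: "AE x in M. min (u x) (v x) = 0" and t: "0 \<le> t"
  obtains a b where "0 \<le> a" "0 \<le> b" "a + b = t"
    "(\<integral>\<^sup>+ s\<in>{0..t}. decr_rearr M (\<lambda>x. u x + v x) s \<partial>lborel)
      \<le> (\<integral>\<^sup>+ s\<in>{0..a}. decr_rearr M u s \<partial>lborel) + (\<integral>\<^sup>+ s\<in>{0..b}. decr_rearr M v s \<partial>lborel)"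
proof -
  note [measurable] = borel_measurable_antimono_ennreal[OF antimono_distrib_fun[OF u]]
    borel_measurable_antimono_ennreal[OF antimono_distrib_fun[OF v]]
  obtain a b where ab: "0 \<le> a" "0 \<le> b" "a + b = t" and split:
    "\<And>l. min (ennreal t) (distrib_fun M u l + distrib_fun M v l)
       \<le> min (ennreal a) (distrib_fun M u l) + min (ennreal b) (distrib_fun M v l)"
    using antimono_min_add_split[OF t antimono_distrib_fun[OF u] antimono_distrib_fun[OF v]] by blast
  have "(\<integral>\<^sup>+ s\<in>{0..t}. decr_rearr M (\<lambda>x. u x + v x) s \<partial>lborel)
      = (\<integral>\<^sup>+ l\<in>{0..}. min (ennreal t) (distrib_fun M u l + distrib_fun M v l) \<partial>lborel)"
    unfolding nn_integral_decr_rearr[OF borel_measurable_add[OF u v] t]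
    using distrib_fun_add_disjoint[OF u v disjoint]
    by (intro nn_integral_cong) (simp split: split_indicator)
  also have "\<dots> \<le> (\<integral>\<^sup>+ l\<in>{0..}. min (ennreal a) (distrib_fun M u l)
      + min (ennreal b) (distrib_fun M v l) \<partial>lborel)"
    using split by (intro nn_integral_mono) (auto split: split_indicator)
  also have "\<dots> = (\<integral>\<^sup>+ s\<in>{0..a}. decr_rearr M u s \<partial>lborel) + (\<integral>\<^sup>+ s\<in>{0..b}. decr_rearr M v s \<partial>lborel)"
    unfolding distrib_right using u v ab
    by (subst nn_integral_add) (auto simp: nn_integral_decr_rearr)
  finally show ?thesis using that ab by blast
qed

lemma nn_integral_decr_rearr_add_le_half:
  assumes w: "w \<in> borel_measurable M" and "0 \<le> a" "0 \<le> b"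
  shows "(\<integral>\<^sup>+ s\<in>{0..a}. decr_rearr M w s \<partial>lborel) + (\<integral>\<^sup>+ s\<in>{0..b}. decr_rearr M w s \<partial>lborel)
    \<le> (\<integral>\<^sup>+ s\<in>{0..a + b}. decr_rearr M w (s / 2) \<partial>lborel)"
proof -
  note [measurable] = borel_measurable_antimono_ennreal[OF antimono_distrib_fun[OF w]]
  have min_add_le: "min (ennreal a) x + min (ennreal b) x \<le> min (ennreal (a + b)) (2 * x)" for x
    using assms(2,3) by (auto simp: mult_2 intro: add_mono)
  have "(\<integral>\<^sup>+ s\<in>{0..a}. decr_rearr M w s \<partial>lborel) + (\<integral>\<^sup>+ s\<in>{0..b}. decr_rearr M w s \<partial>lborel)
      = (\<integral>\<^sup>+ l\<in>{0..}. min (ennreal a) (distrib_fun M w l)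
          + min (ennreal b) (distrib_fun M w l) \<partial>lborel)"
    unfolding distrib_right using w assms(2,3)
    by (subst nn_integral_add) (auto simp: nn_integral_decr_rearr)
  also have "\<dots> \<le> (\<integral>\<^sup>+ l\<in>{0..}. min (ennreal (a + b)) (2 * distrib_fun M w l) \<partial>lborel)"
    using min_add_le by (intro nn_integral_mono) (auto split: split_indicator)
  also have "\<dots> = (\<integral>\<^sup>+ s\<in>{0..a + b}. decr_rearr M w (s / 2) \<partial>lborel)"
    using w assms(2,3) by (simp add: nn_integral_decr_rearr_half)
  finally show ?thesis .
qed

theorem lemma2p1:
  fixes M :: "'a measure" and \<alpha> :: ereal and u v :: "'a \<Rightarrow> real" and f :: "real \<Rightarrow> real"
  assumes "sigma_finite_measure M" and "atomless M"
    and "0 < \<alpha>"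
    and "u \<in> borel_measurable M" and "v \<in> borel_measurable M"
    and "AE x in M. 0 \<le> u x" and "AE x in M. 0 \<le> v x"
    and "AE x in M. min (u x) (v x) = 0"
    and "f \<in> borel_measurable halfline" and "AE s in halfline. 0 \<le> f s"
    and "\<And>t. 0 \<le> t \<Longrightarrow> ereal t < \<alpha> \<Longrightarrow>
          (\<integral>\<^sup>+ s\<in>{0..t}. decr_rearr M u s \<partial>lborel) \<le> (\<integral>\<^sup>+ s\<in>{0..t}. decr_rearr halfline f s \<partial>lborel)"
    and "\<And>t. 0 \<le> t \<Longrightarrow> ereal t < \<alpha> \<Longrightarrow>
          (\<integral>\<^sup>+ s\<in>{0..t}. decr_rearr M v s \<partial>lborel) \<le> (\<integral>\<^sup>+ s\<in>{0..t}. decr_rearr halfline f s \<partial>lborel)"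
  shows "\<forall>t. 0 \<le> t \<and> ereal t < \<alpha> \<longrightarrow>
          (\<integral>\<^sup>+ s\<in>{0..t}. decr_rearr M (\<lambda>x. u x + v x) s \<partial>lborel)
            \<le> (\<integral>\<^sup>+ s\<in>{0..t}. decr_rearr halfline f (s / 2) \<partial>lborel)"
proof (intro allI impI, elim conjE)
  fix t :: real assume t: "0 \<le> t" and t_less: "ereal t < \<alpha>"
  obtain a b where ab: "0 \<le> a" "0 \<le> b" "a + b = t" and sum_le:
    "(\<integral>\<^sup>+ s\<in>{0..t}. decr_rearr M (\<lambda>x. u x + v x) s \<partial>lborel)
      \<le> (\<integral>\<^sup>+ s\<in>{0..a}. decr_rearr M u s \<partial>lborel) + (\<integral>\<^sup>+ s\<in>{0..b}. decr_rearr M v s \<partial>lborel)"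
    using nn_integral_decr_rearr_add_le[OF assms(4,5,8) t] .
  have "ereal a < \<alpha>" "ereal b < \<alpha>"
    using ab t_less by (auto intro: le_less_trans[rotated])
  then have "(\<integral>\<^sup>+ s\<in>{0..a}. decr_rearr M u s \<partial>lborel) + (\<integral>\<^sup>+ s\<in>{0..b}. decr_rearr M v s \<partial>lborel)
      \<le> (\<integral>\<^sup>+ s\<in>{0..a}. decr_rearr halfline f s \<partial>lborel) + (\<integral>\<^sup>+ s\<in>{0..b}. decr_rearr halfline f s \<partial>lborel)"
    using ab by (intro add_mono assms(11,12))
  also have "\<dots> \<le> (\<integral>\<^sup>+ s\<in>{0..t}. decr_rearr halfline f (s / 2) \<partial>lborel)"
    using nn_integral_decr_rearr_add_le_half[OF assms(9) ab(1,2)] ab(3) by simp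
  finally show "(\<integral>\<^sup>+ s\<in>{0..t}. decr_rearr M (\<lambda>x. u x + v x) s \<partial>lborel)
      \<le> (\<integral>\<^sup>+ s\<in>{0..t}. decr_rearr halfline f (s / 2) \<partial>lborel)"
    using sum_le by (rule order_trans[rotated])
qed

end
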